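(* Let $\mathbb{K}$ be a field and $n\geq 1$. (1) For non-empty subsets $I,J$ of $\{1,\dots,n\}$, the spaces $\mathcal{V}^{(1^\star)}_I$ and $\mathcal{V}^{(1^\star)}_J$ are similar if and only if $I=J$. (2) For non-empty proper subsets $I,J$ of $\{1,\dots,n\}$, the spaces $\mathcal{V}^{(2)}_I$ and $\mathcal{V}^{(2)}_J$ are similar if and only if $I=J$ or $I=\{1,\dots,n\}\setminus J$.
   Context: Two subsets $\mathcal{V},\mathcal{W}$ of $M_n(\mathbb{K})$ are similar if $\mathcal{W}=P\mathcal{V}P^{-1}$ for some invertible $P$. $\mathrm{NT}_n(\mathbb{K})$ is the space of strictly upper-triangular $n\times n$ matrices. For a non-empty $I\subset\{1,\dots,n\}$, $D_I$ is the diagonal matrix with $(i,i)$ entry $1$ for $i\in I$ and $0$ otherwise. $\mathcal{V}^{(1^\star)}_I:=\mathbb{K}D_I\oplus\mathrm{NT}_n(\mathbb{K})$, and for $I\neq\{1,\dots,n\}$, $\mathcal{V}^{(2)}_I:=\mathbb{K}I_n\oplus\mathbb{K}D_I\oplus\mathrm{NT}_n(\mathbb{K})$. *)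

theory Defs
  imports "Jordan_Normal_Form.Matrix"
begin

text \<open>Matrices are JNF matrices of dimension n x n with 0-based indices 0..n-1.
  Index sets I are subsets of {1..n} as in the paper; paper index k corresponds
  to matrix index k-1.\<close>

definition NT :: "nat \<Rightarrow> 'a::field mat set" where
  "NT n = {A \<in> carrier_mat n n. \<forall>i<n. \<forall>j<n. j \<le> i \<longrightarrow> A $$ (i, j) = 0}"

definition D :: "nat \<Rightarrow> nat set \<Rightarrow> 'a::field mat" where
  "D n I = mat n n (\<lambda>(i, j). if i = j \<and> Suc i \<in> I then 1 else 0)"

definition V1 :: "nat \<Rightarrow> nat set \<Rightarrow> 'a::field mat set" where
  "V1 n I = {c \<cdot>\<^sub>m D n I + N | c N. N \<in> NT n}"

definition V2 :: "nat \<Rightarrow> nat set \<Rightarrow> 'a::field mat set" where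
  "V2 n I = {a \<cdot>\<^sub>m 1\<^sub>m n + b \<cdot>\<^sub>m D n I + N | a b N. N \<in> NT n}"

definition similar_sets :: "nat \<Rightarrow> 'a::field mat set \<Rightarrow> 'a mat set \<Rightarrow> bool" where
  "similar_sets n V W = (\<exists>P Q. P \<in> carrier_mat n n \<and> Q \<in> carrier_mat n n \<and>
      P * Q = 1\<^sub>m n \<and> Q * P = 1\<^sub>m n \<and> W = (\<lambda>A. P * A * Q) ` V)"

end

theory Submission
  imports Defs
begin

text \<open>A similarity between two spaces lying between \<open>NT\<^sub>n\<close> and the upper-triangular
  matrices \<open>T\<^sub>n\<close> must map \<open>NT\<^sub>n\<close> onto itself, since in such a space \<open>NT\<^sub>n\<close> is exactly the set
  of nilpotent elements. The normalizer of \<open>NT\<^sub>n\<close> is \<open>T\<^sub>n\<close>, and conjugation by an upper-triangular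
  matrix leaves diagonals unchanged. Hence \<open>D\<^sub>I\<close> is conjugated into an element of the other space
  with the same diagonal: the indicator of \<open>I\<close> is \<open>c \<chi>\<^sub>J\<close> (resp. \<open>a + b \<chi>\<^sub>J\<close>), which for
  non-empty (resp. non-empty proper) \<open>I, J\<close> forces \<open>I = J\<close> (resp. \<open>I = J\<close> or its complement).\<close>

definition UT :: "nat \<Rightarrow> 'a::zero mat set" where
  "UT n = {A \<in> carrier_mat n n. upper_triangular A}"

lemma mult_mat_entry:
  assumes "A \<in> carrier_mat n n" "B \<in> carrier_mat n n" "i < n" "j < n"
  shows "(A * B) $$ (i,j) = (\<Sum>k<n. A $$ (i,k) * B $$ (k,j))"
  using assms by (simp add: scalar_prod_def lessThan_atLeast0)

lemma upper_triangular_mult: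
  fixes A B :: "'a::semiring_0 mat"
  assumes A: "A \<in> carrier_mat n n" and B: "B \<in> carrier_mat n n"
    and uA: "upper_triangular A" and uB: "upper_triangular B"
  shows "upper_triangular (A * B)"
proof
  fix i j assume ij: "j < i" "i < dim_row (A * B)"
  have "A $$ (i,k) * B $$ (k,j) = 0" if "k < n" for k
    using upper_triangularD[OF uA, of k i] upper_triangularD[OF uB, of j k] A B ij that
    by (cases "k < i") auto
  then have "(\<Sum>k<n. A $$ (i,k) * B $$ (k,j)) = 0" by simp
  then show "(A * B) $$ (i,j) = 0"
    using mult_mat_entry[OF A B] A ij by simp
qed

lemma diag_mult_upper_triangular:
  fixes A B :: "'a::semiring_0 mat"
  assumes A: "A \<in> carrier_mat n n" and B: "B \<in> carrier_mat n n"
    and uA: "upper_triangular A" and uB: "upper_triangular B" and i: "i < n"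
  shows "(A * B) $$ (i,i) = A $$ (i,i) * B $$ (i,i)"
proof -
  have "A $$ (i,k) * B $$ (k,i) = 0" if "k < n" "k \<noteq> i" for k
    using upper_triangularD[OF uA, of k i] upper_triangularD[OF uB, of i k] A B i that
    by (cases "k < i") auto
  then have "(\<Sum>k\<in>{..<n}-{i}. A $$ (i,k) * B $$ (k,i)) = 0" by simp
  then show ?thesis
    using mult_mat_entry[OF A B i i] i by (simp add: sum.remove)
qed

lemma upper_triangular_pow:
  fixes A :: "'a::semiring_1 mat"
  assumes A: "A \<in> carrier_mat n n" and uA: "upper_triangular A"
  shows "upper_triangular (A ^\<^sub>m k) \<and> (\<forall>i<n. (A ^\<^sub>m k) $$ (i,i) = A $$ (i,i) ^ k)"
proof (induction k)
  case 0
  then show ?case using A by auto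
next
  case (Suc k)
  have "A ^\<^sub>m k \<in> carrier_mat n n" using A by simp
  then show ?case
    using Suc upper_triangular_mult[OF _ A _ uA] diag_mult_upper_triangular[OF _ A _ uA]
    by (simp add: power_commutes)
qed

lemma UT_subset_carrier: "UT n \<subseteq> carrier_mat n n"
  by (auto simp: UT_def)

lemma NT_carrier: "N \<in> NT n \<Longrightarrow> N \<in> carrier_mat n n"
  by (simp add: NT_def)

lemma NT_pow_entry:
  fixes N :: "'a::field mat"
  assumes N: "N \<in> NT n"
  shows "\<forall>i<n. \<forall>j<n. j < i + k \<longrightarrow> (N ^\<^sub>m k) $$ (i,j) = 0"
proof (induction k)
  case 0
  then show ?case using N by (auto simp: NT_def)
next
  case (Suc k)
  have Nc: "N \<in> carrier_mat n n" and Nk: "N ^\<^sub>m k \<in> carrier_mat n n"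
    using NT_carrier[OF N] by auto
  show ?case
  proof (intro allI impI)
    fix i j assume ij: "i < n" "j < n" "j < i + Suc k"
    have "(N ^\<^sub>m k) $$ (i,l) * N $$ (l,j) = 0" if "l < n" for l
      using Suc N ij that by (cases "l < i + k") (auto simp: NT_def)
    then have "(\<Sum>l<n. (N ^\<^sub>m k) $$ (i,l) * N $$ (l,j)) = 0"
      by (intro sum.neutral) auto
    then show "(N ^\<^sub>m Suc k) $$ (i,j) = 0"
      using mult_mat_entry[OF Nk Nc ij(1,2)] by simp
  qed
qed

lemma NT_pow_eq_0:
  fixes N :: "'a::field mat"
  assumes "N \<in> NT n"
  shows "N ^\<^sub>m n = 0\<^sub>m n n"
  using NT_pow_entry[OF assms, of n] NT_carrier[OF assms] by (intro eq_matI) auto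

lemma UT_in_NT_iff_nilpotent:
  fixes A :: "'a::field mat"
  assumes "A \<in> UT n"
  shows "A \<in> NT n \<longleftrightarrow> A ^\<^sub>m n = 0\<^sub>m n n"
proof
  assume A0: "A ^\<^sub>m n = 0\<^sub>m n n"
  have A: "A \<in> carrier_mat n n" and uA: "upper_triangular A"
    using assms by (auto simp: UT_def)
  have "A $$ (i,i) ^ n = 0" if "i < n" for i
    using upper_triangular_pow[OF A uA, of n] A0 that by auto
  then have "A $$ (i,i) = 0" if "i < n" for i
    using that by simp
  then show "A \<in> NT n"
    using A uA by (auto simp: NT_def le_less)
qed (rule NT_pow_eq_0)

subsection \<open>Similarities between spaces containing \<open>NT\<^sub>n\<close> normalize \<open>NT\<^sub>n\<close>\<close>

lemma conj_pow:
  fixes A P Q :: "'a::semiring_1 mat"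
  assumes "A \<in> carrier_mat n n" "P \<in> carrier_mat n n" "Q \<in> carrier_mat n n"
    "P * Q = 1\<^sub>m n" "Q * P = 1\<^sub>m n"
  shows "(P * A * Q) ^\<^sub>m k = P * A ^\<^sub>m k * Q"
  by (rule similar_mat_wit_pow_id) (use assms in \<open>auto simp: similar_mat_wit_def\<close>)

lemma conj_image_inverse:
  fixes P Q :: "'a::semiring_1 mat"
  assumes V: "V \<subseteq> carrier_mat n n" and P: "P \<in> carrier_mat n n" and Q: "Q \<in> carrier_mat n n"
    and QP: "Q * P = 1\<^sub>m n"
  shows "(\<lambda>B. Q * B * P) ` (\<lambda>A. P * A * Q) ` V = V"
proof -
  have "Q * (P * A * Q) * P = A" if "A \<in> V" for A
  proof -
    have A: "A \<in> carrier_mat n n" using V that by auto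
    have "Q * (P * A * Q) * P = (Q * P) * A * (Q * P)"
      using A P Q by (simp add: assoc_mult_mat[of _ n n _ n _ n])
    then show ?thesis using A QP by simp
  qed
  then show ?thesis by (simp add: image_image)
qed

lemma conj_NT_subset_NT:
  fixes P Q :: "'a::field mat"
  assumes "NT n \<subseteq> V" "(\<lambda>A. P * A * Q) ` V \<subseteq> UT n"
    and "P \<in> carrier_mat n n" "Q \<in> carrier_mat n n" "P * Q = 1\<^sub>m n" "Q * P = 1\<^sub>m n"
    and E: "E \<in> NT n"
  shows "P * E * Q \<in> NT n"
proof -
  have "(P * E * Q) ^\<^sub>m n = 0\<^sub>m n n"
    using conj_pow[OF NT_carrier[OF E] assms(3-6)] NT_pow_eq_0[OF E] assms(3,4) by simp
  moreover have "P * E * Q \<in> UT n" using assms E by blast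
  ultimately show ?thesis by (simp add: UT_in_NT_iff_nilpotent)
qed

definition mat_unit :: "nat \<Rightarrow> nat \<Rightarrow> nat \<Rightarrow> 'a::semiring_1 mat" where
  "mat_unit n a b = mat n n (\<lambda>(i,j). if i = a \<and> j = b then 1 else 0)"

lemma mat_unit_NT: "a < b \<Longrightarrow> b < n \<Longrightarrow> mat_unit n a b \<in> NT n"
  by (auto simp: mat_unit_def NT_def)

lemma conj_mat_unit_entry:
  fixes P Q :: "'a::semiring_1 mat"
  assumes P: "P \<in> carrier_mat n n" and Q: "Q \<in> carrier_mat n n"
    and "a < n" "b < n" and rs: "r < n" "s < n"
  shows "(Q * mat_unit n a b * P) $$ (r,s) = Q $$ (r,a) * P $$ (b,s)"
proof -
  let ?E = "mat_unit n a b :: 'a mat"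
  have E: "?E \<in> carrier_mat n n" by (simp add: mat_unit_def)
  have QE: "(Q * ?E) $$ (r,k) = (if k = b then Q $$ (r,a) else 0)" if "k < n" for k
    using mult_mat_entry[OF Q E rs(1) that] assms that
    by (simp add: mat_unit_def if_distrib[of "\<lambda>x. _ * x"] cong: if_cong)
  show ?thesis
    using mult_mat_entry[OF mult_carrier_mat[OF Q E] P rs] assms
    by (simp add: QE if_distrib[of "\<lambda>x. x * _"] cong: if_cong)
qed

lemma inverse_single_term:
  fixes P Q :: "'a::semiring_1 mat"
  assumes P: "P \<in> carrier_mat n n" and Q: "Q \<in> carrier_mat n n" and QP: "Q * P = 1\<^sub>m n"
    and b: "b < n" and below: "\<And>a c. b < a \<Longrightarrow> a < n \<Longrightarrow> c < a \<Longrightarrow> P $$ (a,c) = 0"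
    and r: "r < n" and left: "\<And>a. a < b \<Longrightarrow> Q $$ (r,a) = 0" and c: "c \<le> b"
  shows "Q $$ (r,b) * P $$ (b,c) = (if r = c then 1 else 0)"
proof -
  have "(\<Sum>a\<in>{..<n}-{b}. Q $$ (r,a) * P $$ (a,c)) = 0"
    using below left c by (intro sum.neutral ballI) (auto simp: neq_iff)
  moreover have "(\<Sum>a<n. Q $$ (r,a) * P $$ (a,c)) = (if r = c then 1 else 0)"
    using mult_mat_entry[OF Q P r, of c] QP r b c by simp
  ultimately show ?thesis
    using b by (simp add: sum.remove)
qed

lemma normalizer_NT_upper_triangular:
  fixes P Q :: "'a::field mat"
  assumes P: "P \<in> carrier_mat n n" and Q: "Q \<in> carrier_mat n n"
    and QP: "Q * P = 1\<^sub>m n" and normalizes: "\<And>E. E \<in> NT n \<Longrightarrow> Q * E * P \<in> NT n"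
  shows "upper_triangular P"
proof -
  have QP_zero: "Q $$ (r,a) * P $$ (b,s) = 0" if "a < b" "b < n" "s \<le> r" "r < n" for a b r s
  proof -
    have "(Q * mat_unit n a b * P) $$ (r,s) = 0"
      using normalizes[OF mat_unit_NT[OF that(1,2)]] that by (auto simp: NT_def)
    then show ?thesis using conj_mat_unit_entry[OF P Q, of a b r s] that by simp
  qed
  txt \<open>A nonzero \<open>P $$ (b,s)\<close> with \<open>s < b\<close> makes
    \<open>Q $$ (r,a) = 0\<close> for \<open>r \<ge> s\<close>, \<open>a < b\<close>; then \<open>Q * P = 1\<close> gives \<open>Q $$ (s,b) \<noteq> 0\<close> and hence
    \<open>P $$ (b, s + 1) = 0\<close>, contradicting \<open>Q $$ (s + 1, b) * P $$ (b, s + 1) = 1\<close>.\<close>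
  have "\<forall>s<b. P $$ (b,s) = 0" if "b < n" for b
    using that
  proof (induction "n - b" arbitrary: b rule: less_induct)
    case less
    show ?case
    proof (rule ccontr)
      assume "\<not> (\<forall>s<b. P $$ (b,s) = 0)"
      then obtain s where s: "s < b" "P $$ (b,s) \<noteq> 0" by auto
      have single: "Q $$ (r,b) * P $$ (b,c) = (if r = c then 1 else 0)"
        if "s \<le> r" "r < n" "c \<le> b" for r c
      proof (rule inverse_single_term[OF P Q QP less.prems _ that(2) _ that(3)])
        show "P $$ (a,c) = 0" if "b < a" "a < n" "c < a" for a c
          using less.hyps[of a] that by auto
        show "Q $$ (r,a) = 0" if "a < b" for a
          using QP_zero[of a b s r] s less.prems \<open>s \<le> r\<close> \<open>r < n\<close> that by simp
      qed
      have "Suc s < n" using s less.prems by simp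
      then have "Q $$ (s,b) * P $$ (b,s) = 1" "Q $$ (s,b) * P $$ (b,Suc s) = 0"
        "Q $$ (Suc s,b) * P $$ (b,Suc s) = 1"
        using single[of s s] single[of s "Suc s"] single[of "Suc s" "Suc s"] s by auto
      then show False by auto
    qed
  qed
  then show ?thesis using P by auto
qed

lemma diag_conj_upper_triangular:
  fixes P K Q :: "'a::comm_semiring_1 mat"
  assumes P: "P \<in> UT n" and K: "K \<in> UT n" and Q: "Q \<in> UT n"
    and PQ: "P * Q = 1\<^sub>m n" and i: "i < n"
  shows "(P * K * Q) $$ (i,i) = K $$ (i,i)"
proof -
  have c: "P \<in> carrier_mat n n" "K \<in> carrier_mat n n" "Q \<in> carrier_mat n n"
    and u: "upper_triangular P" "upper_triangular K" "upper_triangular Q"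
    using assms by (auto simp: UT_def)
  have "P $$ (i,i) * Q $$ (i,i) = 1"
    using diag_mult_upper_triangular[OF c(1,3) u(1,3) i] PQ i by simp
  then show ?thesis
    using diag_mult_upper_triangular[OF mult_carrier_mat[OF c(1,2)] c(3) upper_triangular_mult[OF c(1,2) u(1,2)] u(3) i]
      diag_mult_upper_triangular[OF c(1,2) u(1,2) i]
    by (simp add: algebra_simps)
qed

lemma similar_sets_diag:
  fixes V W :: "'a::field mat set"
  assumes V: "NT n \<subseteq> V" "V \<subseteq> UT n" and W: "NT n \<subseteq> W" "W \<subseteq> UT n"
    and S: "similar_sets n V W" and K: "K \<in> V"
  shows "\<exists>L\<in>W. \<forall>i<n. L $$ (i,i) = K $$ (i,i)"
proof -
  obtain P Q where P: "P \<in> carrier_mat n n" and Q: "Q \<in> carrier_mat n n"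
    and PQ: "P * Q = 1\<^sub>m n" and QP: "Q * P = 1\<^sub>m n" and W_eq: "W = (\<lambda>A. P * A * Q) ` V"
    using S unfolding similar_sets_def by blast
  have "V \<subseteq> carrier_mat n n" using V UT_subset_carrier by blast
  then have V_eq: "(\<lambda>B. Q * B * P) ` W = V"
    unfolding W_eq by (rule conj_image_inverse[OF _ P Q QP])
  have "P * E * Q \<in> NT n" "Q * E * P \<in> NT n" if "E \<in> NT n" for E
  proof -
    show "P * E * Q \<in> NT n"
      using conj_NT_subset_NT[OF V(1) _ P Q PQ QP that] W(2) unfolding W_eq by blast
    show "Q * E * P \<in> NT n"
      using conj_NT_subset_NT[OF W(1) _ Q P QP PQ that] V(2) unfolding V_eq by blast
  qed
  then have "P \<in> UT n" "Q \<in> UT n"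
    using normalizer_NT_upper_triangular[OF P Q QP] normalizer_NT_upper_triangular[OF Q P PQ] P Q
    by (auto simp: UT_def)
  then have "\<forall>i<n. (P * K * Q) $$ (i,i) = K $$ (i,i)"
    using diag_conj_upper_triangular[OF _ _ _ PQ] K V(2) by blast
  then show ?thesis using W_eq K by blast
qed

lemma similar_sets_refl:
  assumes "V \<subseteq> carrier_mat n n"
  shows "similar_sets n V V"
  unfolding similar_sets_def
proof (intro exI conjI)
  have "1\<^sub>m n * A * 1\<^sub>m n = A" if "A \<in> V" for A
    using assms that by auto
  then show "V = (\<lambda>A. 1\<^sub>m n * A * 1\<^sub>m n) ` V"
    by simp
qed auto

lemma D_dim [simp]: "dim_row (D n I) = n" "dim_col (D n I) = n"
  by (simp_all add: D_def)

lemma D_entry [simp]: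
  "i < n \<Longrightarrow> j < n \<Longrightarrow> D n I $$ (i,j) = (if i = j \<and> Suc i \<in> I then 1 else 0)"
  by (simp add: D_def)

lemma D_diag: "k \<in> {1..n} \<Longrightarrow> D n I $$ (k - 1, k - 1) = (if k \<in> I then 1 else 0)"
  by auto

lemma zero_NT [simp]: "0\<^sub>m n n \<in> NT n"
  by (simp add: NT_def)

lemma NT_subset_V1: "NT n \<subseteq> V1 n I"
proof
  fix N :: "'a::field mat" assume N: "N \<in> NT n"
  have "N = 0 \<cdot>\<^sub>m D n I + N" using NT_carrier[OF N] by (intro eq_matI) auto
  then show "N \<in> V1 n I" using N unfolding V1_def by blast
qed

lemma NT_subset_V2: "NT n \<subseteq> V2 n I"
proof
  fix N :: "'a::field mat" assume N: "N \<in> NT n"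
  have "N = 0 \<cdot>\<^sub>m 1\<^sub>m n + 0 \<cdot>\<^sub>m D n I + N" using NT_carrier[OF N] by (intro eq_matI) auto
  then show "N \<in> V2 n I" using N unfolding V2_def by blast
qed

lemma V1_subset_UT: "V1 n I \<subseteq> UT n"
  by (auto simp: V1_def NT_def UT_def upper_triangular_def)

lemma V2_subset_UT: "V2 n I \<subseteq> UT n"
  by (auto simp: V2_def NT_def UT_def upper_triangular_def)

lemma D_in_V1: "D n I \<in> V1 n I"
proof -
  have "D n I = 1 \<cdot>\<^sub>m D n I + 0\<^sub>m n n" by (rule eq_matI) auto
  then show ?thesis unfolding V1_def using zero_NT by blast
qed

lemma D_in_V2: "D n I \<in> V2 n I"
proof -
  have "D n I = 0 \<cdot>\<^sub>m 1\<^sub>m n + 1 \<cdot>\<^sub>m D n I + 0\<^sub>m n n" by (rule eq_matI) auto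
  then show ?thesis unfolding V2_def using zero_NT by blast
qed

lemma similar_sets_diag_D:
  fixes V W :: "'a::field mat set"
  assumes "NT n \<subseteq> V" "V \<subseteq> UT n" "NT n \<subseteq> W" "W \<subseteq> UT n" "similar_sets n V W"
    and "D n I \<in> V"
  shows "\<exists>L\<in>W. \<forall>k\<in>{1..n}. L $$ (k - 1, k - 1) = (if k \<in> I then 1 else 0)"
proof -
  obtain L where "L \<in> W" and L: "\<forall>i<n. L $$ (i,i) = D n I $$ (i,i)"
    using similar_sets_diag[OF assms] by blast
  moreover have "L $$ (k - 1, k - 1) = (if k \<in> I then 1 else 0)" if k: "k \<in> {1..n}" for k
  proof -
    have "k - 1 < n" using k by auto
    with L show ?thesis using D_diag[OF k, of I] by simp
  qed
  ultimately show ?thesis by blast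
qed

lemma diag_V1:
  assumes "A \<in> V1 n J"
  shows "\<exists>c. \<forall>k\<in>{1..n}. A $$ (k - 1, k - 1) = c * (if k \<in> J then 1 else 0)"
  using assms by (force simp: V1_def NT_def)

lemma diag_V2:
  assumes "A \<in> V2 n J"
  shows "\<exists>a b. \<forall>k\<in>{1..n}. A $$ (k - 1, k - 1) = a + b * (if k \<in> J then 1 else 0)"
  using assms by (force simp: V2_def NT_def)

lemma V2_complement:
  assumes "J \<subseteq> {1..n}"
  shows "V2 n ({1..n} - J) = (V2 n J :: 'a::field mat set)"
proof -
  have D: "D n ({1..n} - J) = 1\<^sub>m n + (-1 :: 'a) \<cdot>\<^sub>m D n J"
    by (rule eq_matI) (use assms in auto)
  have swap: "a \<cdot>\<^sub>m 1\<^sub>m n + b \<cdot>\<^sub>m D n ({1..n} - J) + N = (a + b) \<cdot>\<^sub>m 1\<^sub>m n + (- b) \<cdot>\<^sub>m D n J + N"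
    if "N \<in> carrier_mat n n" for a b :: 'a and N
    unfolding D by (rule eq_matI) (use that in \<open>auto simp: algebra_simps\<close>)
  have "a \<cdot>\<^sub>m 1\<^sub>m n + b \<cdot>\<^sub>m D n J + N = (a + b) \<cdot>\<^sub>m 1\<^sub>m n + (- b) \<cdot>\<^sub>m D n ({1..n} - J) + N"
    if "N \<in> carrier_mat n n" for a b :: 'a and N
    using swap[OF that, of "a + b" "- b"] by simp
  then show ?thesis
    unfolding V2_def using swap NT_carrier by blast
qed

lemma indicator_scaled_eq:
  fixes c :: "'a::field"
  assumes eq: "\<And>k. k \<in> S \<Longrightarrow> (if k \<in> I then 1 else 0) = c * (if k \<in> J then 1 else 0)"
    and "I \<subseteq> S" "J \<subseteq> S" "I \<noteq> {}"
  shows "I = J"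
proof -
  obtain x where "x \<in> I" using assms(4) by auto
  then have "c = 1" using eq[of x] assms(2) by (auto split: if_splits)
  then have "k \<in> I \<longleftrightarrow> k \<in> J" if "k \<in> S" for k
    using eq[OF that] by (auto split: if_splits)
  then show ?thesis using assms(2,3) by blast
qed

lemma indicator_affine_eq:
  fixes a b :: "'a::field"
  assumes eq: "\<And>k. k \<in> S \<Longrightarrow> (if k \<in> I then 1 else 0) = a + b * (if k \<in> J then 1 else 0)"
    and "I \<subseteq> S" "J \<subseteq> S" "I \<noteq> {}" "I \<noteq> S" "J \<noteq> {}" "J \<noteq> S"
  shows "I = J \<or> I = S - J"
proof -
  obtain x x' y y' where "x \<in> I" "x' \<in> S - I" "y \<in> J" "y' \<in> S - J"
    using assms(2-7) by blast
  then have "b \<noteq> 0" and ab: "(if y \<in> I then 1 else 0) = a + b" "(if y' \<in> I then 1 else 0) = a"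
    using eq[of x] eq[of x'] eq[of y] eq[of y'] assms(2,3) by auto
  show ?thesis
  proof (cases "y' \<in> I")
    case False
    then have "a = 0" "b = 1" using ab \<open>b \<noteq> 0\<close> by (auto split: if_splits)
    then have "k \<in> I \<longleftrightarrow> k \<in> J" if "k \<in> S" for k
      using eq[OF that] by (auto split: if_splits)
    then show ?thesis using assms(2,3) by blast
  next
    case True
    then have "a = 1" "b = - 1" using ab \<open>b \<noteq> 0\<close> by (auto split: if_splits simp: add_eq_0_iff)
    then have "k \<in> I \<longleftrightarrow> k \<notin> J" if "k \<in> S" for k
      using eq[OF that] by (auto split: if_splits)
    then show ?thesis using assms(2,3) by blast
  qed
qed

lemma V1_similar_iff:
  assumes "I \<noteq> {}" "I \<subseteq> {1..n}" "J \<noteq> {}" "J \<subseteq> {1..n}"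
  shows "similar_sets n (V1 n I :: 'a::field mat set) (V1 n J) \<longleftrightarrow> I = J"
proof
  assume "similar_sets n (V1 n I :: 'a mat set) (V1 n J)"
  then obtain L :: "'a mat" where "L \<in> V1 n J"
    and L: "\<forall>k\<in>{1..n}. L $$ (k - 1, k - 1) = (if k \<in> I then 1 else 0)"
    using similar_sets_diag_D[OF NT_subset_V1 V1_subset_UT NT_subset_V1 V1_subset_UT _ D_in_V1] by blast
  then obtain c :: 'a where diag: "\<forall>k\<in>{1..n}. L $$ (k - 1, k - 1) = c * (if k \<in> J then 1 else 0)"
    using diag_V1 by blast
  show "I = J"
  proof (rule indicator_scaled_eq[of "{1..n}" I c J])
    fix k assume "k \<in> {1..n}"
    then show "(if k \<in> I then 1 else 0) = c * (if k \<in> J then 1 else 0)"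
      using L diag by metis
  qed (use assms in auto)
next
  assume "I = J"
  then show "similar_sets n (V1 n I :: 'a mat set) (V1 n J)"
    using similar_sets_refl[OF subset_trans[OF V1_subset_UT UT_subset_carrier]] by simp
qed

lemma V2_similar_iff:
  assumes "I \<noteq> {}" "I \<subset> {1..n}" "J \<noteq> {}" "J \<subset> {1..n}"
  shows "similar_sets n (V2 n I :: 'a::field mat set) (V2 n J) \<longleftrightarrow> I = J \<or> I = {1..n} - J"
proof
  assume "similar_sets n (V2 n I :: 'a mat set) (V2 n J)"
  then obtain L :: "'a mat" where "L \<in> V2 n J"
    and L: "\<forall>k\<in>{1..n}. L $$ (k - 1, k - 1) = (if k \<in> I then 1 else 0)"
    using similar_sets_diag_D[OF NT_subset_V2 V2_subset_UT NT_subset_V2 V2_subset_UT _ D_in_V2] by blast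
  then obtain a b :: 'a where diag: "\<forall>k\<in>{1..n}. L $$ (k - 1, k - 1) = a + b * (if k \<in> J then 1 else 0)"
    using diag_V2 by blast
  show "I = J \<or> I = {1..n} - J"
  proof (rule indicator_affine_eq[of "{1..n}" I a b J])
    fix k assume "k \<in> {1..n}"
    then show "(if k \<in> I then 1 else 0) = a + b * (if k \<in> J then 1 else 0)"
      using L diag by metis
  qed (use assms in auto)
next
  assume "I = J \<or> I = {1..n} - J"
  then have "V2 n I = (V2 n J :: 'a mat set)"
    using V2_complement[of J n] assms by auto
  then show "similar_sets n (V2 n I :: 'a mat set) (V2 n J)"
    using similar_sets_refl[OF subset_trans[OF V2_subset_UT UT_subset_carrier]] by simp
qed

theorem mainTheorem3:
  fixes n :: nat and I J :: "nat set"
  assumes "n \<ge> 1"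
  shows "(I \<noteq> {} \<and> I \<subseteq> {1..n} \<and> J \<noteq> {} \<and> J \<subseteq> {1..n} \<longrightarrow>
            (similar_sets n (V1 n I :: 'a::field mat set) (V1 n J) \<longleftrightarrow> I = J))
       \<and> (I \<noteq> {} \<and> I \<subset> {1..n} \<and> J \<noteq> {} \<and> J \<subset> {1..n} \<longrightarrow>
            (similar_sets n (V2 n I :: 'a::field mat set) (V2 n J) \<longleftrightarrow> I = J \<or> I = {1..n} - J))"
  using V1_similar_iff[of I n J] V2_similar_iff[of I n J] by blast

end
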